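(* Let $(T,z)\in\mathbb{R}\times\Sigma_E$ with $\Phi_T(z)=z$ and $\nabla H(z)\neq 0$, and let $M=M_z(T)$. Let $\mathcal{E}_1:=\ker(M-I)\cap T_z\Sigma_E$ and $\mathcal{E}_2:=\{x\in\mathcal{E}_1:\ w_0(x,y)=0\ \forall y\in\mathcal{E}_1\}$. Then $$E_1=\ker(M-I)^2\iff \dim E_1=\dim\mathcal{E}_1+\dim\mathcal{E}_2.$$
   Context: $H:\mathbb{R}^{2n}\to\mathbb{R}$ smooth, $\Sigma_E=\{H=E\}$, $J=\begin{pmatrix}0&I_n\\-I_n&0\end{pmatrix}$, $\Phi_t$ the flow of $\dot z=J\nabla H(z)$, $M_z(t)=\partial_z\Phi_t(z)$ (a symplectic matrix). $E_1:=\sum_{k\ge1}\ker(M-I)^k$ is the algebraic eigenspace of $M$ for eigenvalue $1$. $w_0(x,y):=\langle Jx,y\rangle_{\mathbb{R}^{2n}}$. *)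

theory Defs
  imports "HOL-Analysis.Analysis"
begin

text \<open>Phase space R^{2n} is rendered as (real^'n) \<times> (real^'n), z = (q,p).\<close>

fun iter_deriv :: "'a::real_normed_vector list \<Rightarrow> ('a \<Rightarrow> real) \<Rightarrow> 'a \<Rightarrow> real" where
  "iter_deriv [] f = f"
| "iter_deriv (v # vs) f = (\<lambda>x. frechet_derivative (iter_deriv vs f) (at x) v)"

definition smooth_fun :: "('a::real_normed_vector \<Rightarrow> real) \<Rightarrow> bool" where
  "smooth_fun f \<longleftrightarrow> (\<forall>vs. continuous_on UNIV (iter_deriv vs f) \<and>
                              (\<forall>x. iter_deriv vs f differentiable (at x)))"

definition grad :: "('a::euclidean_space \<Rightarrow> real) \<Rightarrow> 'a \<Rightarrow> 'a" where
  "grad H z = (\<Sum>b\<in>Basis. frechet_derivative H (at z) b *\<^sub>R b)"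

text \<open>Standard symplectic matrix J = [[0, I],[-I, 0]]: J (q,p) = (p, -q).\<close>
definition Jmat :: "(real^'n) \<times> (real^'n) \<Rightarrow> (real^'n) \<times> (real^'n)" where
  "Jmat z = (snd z, - fst z)"

definition w0 :: "(real^'n) \<times> (real^'n) \<Rightarrow> (real^'n) \<times> (real^'n) \<Rightarrow> real" where
  "w0 x y = inner (Jmat x) y"

definition hamiltonian_flow ::
  "((real^'n) \<times> (real^'n) \<Rightarrow> real) \<Rightarrow> (real \<Rightarrow> (real^'n) \<times> (real^'n) \<Rightarrow> (real^'n) \<times> (real^'n)) \<Rightarrow> bool" where
  "hamiltonian_flow H Phi \<longleftrightarrow>
     (\<forall>z. Phi 0 z = z \<and>
          (\<forall>t. ((\<lambda>s. Phi s z) has_vector_derivative Jmat (grad H (Phi t z))) (at t)))"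

end

theory Submission
  imports Defs
begin

text \<open>The linearised return map \<open>M\<close> is symplectic and, since \<open>z\<close> lies on a \<open>T\<close>-periodic
  orbit, it fixes the Hamiltonian vector field \<open>v = J \<nabla>H(z)\<close>. Put \<open>N = M - I\<close> and
  \<open>K = ker N\<close>. Symplecticity gives \<open>range N = K\<^sup>\<omega>\<close>, the \<open>w0\<close>-orthogonal of \<open>K\<close>, hence
  \<open>dim ker N\<^sup>2 = dim K + dim (K \<inter> K\<^sup>\<omega>)\<close>. The space \<open>\<E>1\<close> is the hyperplane
  \<open>{x \<in> K. w0 v x = 0}\<close> of \<open>K\<close> and \<open>\<E>2\<close> is its radical; whether or not \<open>v\<close> lies in
  \<open>K\<^sup>\<omega>\<close>, one finds \<open>dim \<E>1 + dim \<E>2 = dim K + dim (K \<inter> K\<^sup>\<omega>)\<close> as well. As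
  \<open>ker N\<^sup>2 \<subseteq> E1\<close> are subspaces, they coincide iff their dimensions agree.

  On the analytic side, \<open>M\<close> is the solution operator of the variational equation
  \<open>y' = J \<nabla>\<^sup>2H(\<Phi>\<^sub>t z) y\<close>: solutions exist by Picard iteration, and uniqueness as
  well as the differentiability of the flow follow from a Gronwall-type barrier argument. By
  Schwarz's theorem the Hessian is symmetric, so the variational equation conserves \<open>w0\<close>;
  and \<open>t \<mapsto> J \<nabla>H(\<Phi>\<^sub>t z)\<close> is one of its solutions.\<close>

type_synonym 'n phase_space = "(real^'n) \<times> (real^'n)"

section \<open>Kernels and dimensions\<close>

lemma dim_eq_dim_image_plus_dim_kernel:
  fixes f :: "'a::euclidean_space \<Rightarrow> 'b::euclidean_space"
  assumes lf: "linear f" and V: "subspace V"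
  shows "dim V = dim (f ` V) + dim {x\<in>V. f x = 0}"
proof -
  define A where "A = {x\<in>V. f x = 0}"
  define W where "W = {y\<in>V. \<forall>x\<in>A. orthogonal x y}"
  have sA: "subspace A" unfolding A_def
    using subspace_inter[OF V linear_subspace_kernel[OF lf]] by (simp add: Int_def)
  have AV: "A \<subseteq> V" unfolding A_def by auto
  have dim_W: "dim W + dim A = dim V" unfolding W_def
    by (rule dim_subspace_orthogonal_to_vectors[OF sA V AV])
  have sW: "subspace W" unfolding W_def using V
    by (auto simp: subspace_def orthogonal_clauses)
  have "f ` V \<subseteq> f ` W"
  proof
    fix u assume "u \<in> f ` V"
    then obtain v where v: "v \<in> V" "u = f v" by auto
    obtain p q where pq: "p \<in> span A" "\<And>w. w \<in> span A \<Longrightarrow> orthogonal q w" "v = p + q"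
      using orthogonal_subspace_decomp_exists[of A v] by metis
    have pA: "p \<in> A" using pq(1) sA by (metis span_eq_iff)
    have "q \<in> V" using pq(3) pA AV v(1) V
      by (metis add_diff_cancel_left' subsetD subspace_diff)
    then have "q \<in> W" unfolding W_def using pq(2) span_superset
      by (auto simp: orthogonal_commute)
    moreover have "f v = f q" using pq(3) pA lf unfolding A_def
      by (simp add: linear_add)
    ultimately show "u \<in> f ` W" using v by auto
  qed
  then have img: "f ` W = f ` V" unfolding W_def by auto
  have "inj_on f (span W)"
  proof (rule inj_onI)
    fix x y assume xy: "x \<in> span W" "y \<in> span W" "f x = f y"
    have "x \<in> W" "y \<in> W" using xy(1,2) unfolding span_eq_iff[THEN iffD2, OF sW] .
    then have "x - y \<in> W" by (rule subspace_diff[OF sW])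
    moreover then have "x - y \<in> A" unfolding A_def W_def using xy(3) lf
      by (simp add: linear_diff)
    ultimately have "orthogonal (x - y) (x - y)" unfolding W_def by auto
    then show "x = y" by (simp add: orthogonal_self)
  qed
  then have "dim (f ` W) = dim W" by (rule dim_image_eq[OF lf])
  then show ?thesis using dim_W img unfolding A_def by simp
qed

lemma dim_kernel_square:
  fixes N :: "'a::euclidean_space \<Rightarrow> 'a"
  assumes "linear N"
  shows "dim {x. N (N x) = 0} = dim ({x. N x = 0} \<inter> range N) + dim {x. N x = 0}"
proof -
  have "subspace {x. N (N x) = 0}"
    using linear_subspace_kernel[OF linear_compose[OF assms assms]] by (simp add: o_def)
  moreover have "N ` {x. N (N x) = 0} = {x. N x = 0} \<inter> range N" by auto
  moreover have "{x \<in> {x. N (N x) = 0}. N x = 0} = {x. N x = 0}"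
    using linear_0[OF assms] by auto
  ultimately show ?thesis using dim_eq_dim_image_plus_dim_kernel[OF assms] by metis
qed

lemma dim_eq_dim_kernel_functional_Suc:
  fixes \<phi> :: "'a::euclidean_space \<Rightarrow> real"
  assumes lin: "linear \<phi>" and K: "subspace K" and x0: "x0 \<in> K" "\<phi> x0 \<noteq> 0"
  shows "dim K = Suc (dim {x\<in>K. \<phi> x = 0})"
proof -
  have "r \<in> \<phi> ` K" for r
  proof
    show "r = \<phi> ((r / \<phi> x0) *\<^sub>R x0)" using x0(2) by (simp add: linear_scale[OF lin])
    show "(r / \<phi> x0) *\<^sub>R x0 \<in> K" using K x0(1) by (simp add: subspace_scale)
  qed
  then have "\<phi> ` K = UNIV" by auto
  then show ?thesis using dim_eq_dim_image_plus_dim_kernel[OF lin K] by (simp add: dim_UNIV)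
qed

lemma linear_funpow:
  fixes f :: "'a::real_vector \<Rightarrow> 'a"
  assumes "linear f"
  shows "linear (f ^^ k)"
proof (induction k)
  case 0
  show ?case by (simp add: linear_id[unfolded id_def])
next
  case (Suc k)
  then show ?case using linear_compose[OF Suc.IH assms] by (simp add: o_def)
qed

lemma subspace_generalized_kernel:
  fixes N :: "'a::real_vector \<Rightarrow> 'a"
  assumes lin: "linear N"
  shows "subspace {x. \<exists>k\<ge>1. (N ^^ k) x = 0}"
  unfolding subspace_def
proof (intro conjI ballI allI)
  note linNk = linear_funpow[OF lin]
  show "0 \<in> {x. \<exists>k\<ge>1. (N ^^ k) x = 0}"
    using linear_0[OF linNk[of 1]] by blast
  fix x y assume "x \<in> {x. \<exists>k\<ge>1. (N ^^ k) x = 0}" "y \<in> {x. \<exists>k\<ge>1. (N ^^ k) x = 0}"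
  then obtain k l where k: "k \<ge> 1" "(N ^^ k) x = 0" and l: "(N ^^ l) y = 0"
    by auto
  have "(N ^^ (l + k)) x = 0" "(N ^^ (k + l)) y = 0"
    using k(2) l linear_0[OF linNk] by (simp_all add: funpow_add)
  then have "(N ^^ (k + l)) (x + y) = 0"
    by (simp add: linear_add[OF linNk] add.commute)
  then show "x + y \<in> {x. \<exists>k\<ge>1. (N ^^ k) x = 0}"
    using k(1) by (auto intro!: exI[of _ "k + l"])
next
  fix c and x assume "x \<in> {x. \<exists>k\<ge>1. (N ^^ k) x = 0}"
  then show "c *\<^sub>R x \<in> {x. \<exists>k\<ge>1. (N ^^ k) x = 0}"
    by (auto simp: linear_scale[OF linear_funpow[OF lin]])
qed

section \<open>The symplectic form and symplectic complements\<close>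

lemma linear_Jmat: "linear Jmat"
  unfolding Jmat_def by (intro linearI) (auto simp: algebra_simps)

lemma bounded_linear_Jmat: "bounded_linear Jmat"
  using linear_Jmat by (simp add: linear_conv_bounded_linear)

lemma Jmat_Jmat [simp]: "Jmat (Jmat x) = - x"
  unfolding Jmat_def by (cases x) simp

lemma inj_Jmat: "inj Jmat"
  by (rule inj_on_inverseI[where g = "\<lambda>y. - Jmat y"]) simp

lemma Jmat_inner_Jmat [simp]: "inner (Jmat x) (Jmat y) = inner x y"
  unfolding Jmat_def by (cases x, cases y) (simp add: inner_Pair)

lemma w0_commute: "w0 x y = - w0 y x"
  unfolding w0_def Jmat_def by (cases x, cases y) (simp add: inner_Pair inner_commute)

lemma w0_self [simp]: "w0 x x = 0"
  using w0_commute[of x x] by simp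

lemma w0_eq_0_commute: "w0 x y = 0 \<longleftrightarrow> w0 y x = 0"
  using w0_commute[of x y] by simp

lemma linear_w0_right: "linear (w0 x)"
  unfolding w0_def by (rule bounded_linear.linear[OF bounded_linear_inner_right])

lemma linear_w0_left: "linear (\<lambda>x. w0 x y)"
  unfolding w0_def
  using linear_compose[OF linear_Jmat bounded_linear.linear[OF bounded_linear_inner_left]]
  by (simp add: o_def)

lemmas w0_bilinear_simps =
  linear_add[OF linear_w0_left] linear_diff[OF linear_w0_left] linear_scale[OF linear_w0_left]
  linear_add[OF linear_w0_right] linear_diff[OF linear_w0_right] linear_scale[OF linear_w0_right]

definition symplectic_complement :: "('n::finite) phase_space set \<Rightarrow> 'n phase_space set"
  where "symplectic_complement K = {y. \<forall>x\<in>K. w0 x y = 0}"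

lemma subspace_symplectic_complement: "subspace (symplectic_complement K)"
  unfolding symplectic_complement_def
  by (auto simp: subspace_def linear_0[OF linear_w0_right] linear_add[OF linear_w0_right]
      linear_scale[OF linear_w0_right])

lemma dim_symplectic_complement:
  fixes K :: "('n::finite) phase_space set"
  assumes "subspace K"
  shows "dim (symplectic_complement K) + dim K = DIM('n phase_space)"
proof -
  have "symplectic_complement K = {y \<in> UNIV. \<forall>x \<in> Jmat ` K. orthogonal x y}"
    unfolding symplectic_complement_def orthogonal_def w0_def by auto
  moreover have "dim (Jmat ` K) = dim K"
    using dim_image_eq[OF linear_Jmat] inj_Jmat by (metis inj_on_subset top_greatest)
  ultimately show ?thesis
    using dim_subspace_orthogonal_to_vectors[OF linear_subspace_image[OF linear_Jmat assms]
        subspace_UNIV]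
    by (simp add: dim_UNIV)
qed

lemma range_diff_id_eq_symplectic_complement:
  fixes M :: "('n::finite) phase_space \<Rightarrow> 'n phase_space"
  assumes lin: "linear M" and symp: "\<And>x y. w0 (M x) (M y) = w0 x y"
  shows "range (\<lambda>x. M x - x) = symplectic_complement {x. M x = x}"
proof (rule subspace_dim_equal)
  have linN: "linear (\<lambda>x. M x - x)"
    using linear_compose_sub[OF lin linear_id] by (simp add: id_def)
  show "subspace (range (\<lambda>x. M x - x))"
    by (rule linear_subspace_image[OF linN subspace_UNIV])
  show "subspace (symplectic_complement {x. M x = x})"
    by (rule subspace_symplectic_complement)
  show "range (\<lambda>x. M x - x) \<subseteq> symplectic_complement {x. M x = x}"
    unfolding symplectic_complement_def by (auto simp: w0_bilinear_simps) (metis symp)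
  have "DIM('n phase_space) = dim (range (\<lambda>x. M x - x)) + dim {x. M x = x}"
    using dim_eq_dim_image_plus_dim_kernel[OF linN subspace_UNIV] by (simp add: dim_UNIV)
  moreover have "subspace {x. M x = x}"
    using linear_subspace_kernel[OF linN] by simp
  ultimately show "dim (symplectic_complement {x. M x = x}) \<le> dim (range (\<lambda>x. M x - x))"
    using dim_symplectic_complement by fastforce
qed

lemma radical_symplectic_hyperplane:
  fixes K :: "('n::finite) phase_space set"
  assumes K: "subspace K" and v: "v \<in> K" "v \<notin> symplectic_complement K"
  defines "F \<equiv> {x\<in>K. w0 v x = 0}"
  shows "F \<inter> symplectic_complement F = span (insert v (K \<inter> symplectic_complement K))"
proof
  have sF: "subspace F"
    unfolding F_def using subspace_inter[OF K linear_subspace_kernel[OF linear_w0_right]]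
    by (simp add: Int_def)
  have "K \<inter> symplectic_complement K \<subseteq> symplectic_complement F"
    unfolding F_def symplectic_complement_def by auto
  moreover have "v \<in> symplectic_complement F"
    unfolding F_def symplectic_complement_def using w0_eq_0_commute by blast
  moreover have "insert v (K \<inter> symplectic_complement K) \<subseteq> F"
    unfolding F_def symplectic_complement_def using v(1) w0_eq_0_commute by auto
  ultimately show "span (insert v (K \<inter> symplectic_complement K)) \<subseteq> F \<inter> symplectic_complement F"
    by (intro span_minimal subspace_inter sF subspace_symplectic_complement) auto
next
  obtain x0 where x0: "x0 \<in> K" "w0 x0 v \<noteq> 0"
    using v(2) unfolding symplectic_complement_def by auto
  show "F \<inter> symplectic_complement F \<subseteq> span (insert v (K \<inter> symplectic_complement K))"
  proof
    fix x assume x: "x \<in> F \<inter> symplectic_complement F"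
    define c where "c = w0 x0 x / w0 x0 v"
    define a where "a = x - c *\<^sub>R v"
    have "a \<in> symplectic_complement K"
      unfolding symplectic_complement_def
    proof (intro CollectI ballI)
      fix y assume y: "y \<in> K"
      define d where "d = w0 v y / w0 v x0"
      have "y - d *\<^sub>R x0 \<in> F"
        unfolding F_def d_def using x0 y K w0_commute[of x0 v]
        by (simp add: subspace_diff subspace_scale w0_bilinear_simps)
      then have "w0 (y - d *\<^sub>R x0) x = 0" "w0 (y - d *\<^sub>R x0) v = 0"
        using x w0_eq_0_commute unfolding F_def symplectic_complement_def by blast+
      then show "w0 y a = 0"
        unfolding a_def c_def using x0(2) by (simp add: w0_bilinear_simps field_simps)
    qed
    moreover have "a \<in> K"
      unfolding a_def using x K v(1) unfolding F_def by (simp add: subspace_diff subspace_scale)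
    ultimately have "a \<in> span (insert v (K \<inter> symplectic_complement K))"
      by (simp add: span_base)
    then show "x \<in> span (insert v (K \<inter> symplectic_complement K))"
      unfolding a_def by (metis diff_add_cancel insertI1 span_add span_base span_scale)
  qed
qed

lemma dim_radical_symplectic_hyperplane:
  fixes K :: "('n::finite) phase_space set"
  assumes K: "subspace K" and v: "v \<in> K"
  defines "F \<equiv> {x\<in>K. w0 v x = 0}"
  shows "dim F + dim (F \<inter> symplectic_complement F) = dim K + dim (K \<inter> symplectic_complement K)"
proof (cases "v \<in> symplectic_complement K")
  case True
  then have "F = K" unfolding F_def symplectic_complement_def using w0_eq_0_commute by blast
  then show ?thesis by simp
next
  case False
  then obtain x0 where "x0 \<in> K" "w0 v x0 \<noteq> 0"
    unfolding symplectic_complement_def using w0_eq_0_commute by blast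
  then have "dim K = Suc (dim F)"
    unfolding F_def by (rule dim_eq_dim_kernel_functional_Suc[OF linear_w0_right K])
  moreover have "dim (F \<inter> symplectic_complement F) = Suc (dim (K \<inter> symplectic_complement K))"
  proof -
    have "span (K \<inter> symplectic_complement K) = K \<inter> symplectic_complement K"
      by (rule span_eq_iff[THEN iffD2, OF subspace_inter[OF K subspace_symplectic_complement]])
    then have "v \<notin> span (K \<inter> symplectic_complement K)"
      using False by (metis IntD2)
    then show ?thesis
      unfolding F_def radical_symplectic_hyperplane[OF K v False] dim_span by (simp add: dim_insert)
  qed
  ultimately show ?thesis by simp
qed

lemma symplectic_generalized_eigenspace_one_iff:
  fixes M :: "('n::finite) phase_space \<Rightarrow> 'n phase_space"
  assumes lin: "linear M" and symp: "\<And>x y. w0 (M x) (M y) = w0 x y"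
    and fixed: "M (Jmat g) = Jmat g"
  defines "N \<equiv> \<lambda>x. M x - x"
    and "F \<equiv> {x. M x = x \<and> inner g x = 0}"
  shows "{x. \<exists>k\<ge>1. (N ^^ k) x = 0} = {x. (N ^^ 2) x = 0} \<longleftrightarrow>
    dim {x. \<exists>k\<ge>1. (N ^^ k) x = 0} = dim F + dim {x \<in> F. \<forall>y\<in>F. w0 x y = 0}"
proof -
  have linN: "linear N"
    unfolding N_def using linear_compose_sub[OF lin linear_id] by (simp add: id_def)
  define K where "K = {x. M x = x}"
  have sK: "subspace K"
    unfolding K_def using linear_subspace_kernel[OF linN] by (simp add: N_def)
  have F_eq: "F = {x\<in>K. w0 (Jmat g) x = 0}"
    unfolding F_def K_def w0_def by auto
  have "{x \<in> F. \<forall>y\<in>F. w0 x y = 0} = F \<inter> symplectic_complement F"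
    unfolding symplectic_complement_def using w0_eq_0_commute by blast
  then have "dim F + dim {x \<in> F. \<forall>y\<in>F. w0 x y = 0} = dim K + dim (K \<inter> symplectic_complement K)"
    unfolding F_eq using dim_radical_symplectic_hyperplane[OF sK] fixed by (simp add: K_def)
  also have "\<dots> = dim {x. N (N x) = 0}"
    using dim_kernel_square[OF linN] range_diff_id_eq_symplectic_complement[OF lin symp]
    by (simp add: K_def N_def)
  finally have dim_eq: "dim {x. (N ^^ 2) x = 0} = dim F + dim {x \<in> F. \<forall>y\<in>F. w0 x y = 0}"
    by (simp add: numeral_2_eq_2)
  let ?E = "{x. \<exists>k\<ge>1. (N ^^ k) x = 0}" and ?K2 = "{x. (N ^^ 2) x = 0}"
  have "subspace ?K2"
    by (rule linear_subspace_kernel[OF linear_funpow[OF linN]])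
  moreover have "?K2 \<subseteq> ?E"
    using one_le_numeral by blast
  ultimately have K2_eq: "dim ?E \<le> dim ?K2 \<Longrightarrow> ?K2 = ?E"
    by (rule subspace_dim_equal[OF _ subspace_generalized_kernel[OF linN]])
  show ?thesis
  proof
    assume "?E = ?K2"
    then show "dim ?E = dim F + dim {x \<in> F. \<forall>y\<in>F. w0 x y = 0}" using dim_eq by simp
  next
    assume "dim ?E = dim F + dim {x \<in> F. \<forall>y\<in>F. w0 x y = 0}"
    then have "?K2 = ?E" using dim_eq by (intro K2_eq) simp
    then show "?E = ?K2" by (rule sym)
  qed
qed

section \<open>Symmetry of second derivatives\<close>

lemma has_derivative_along_line:
  fixes f :: "'a::real_normed_vector \<Rightarrow> real"
  assumes "(f has_derivative Df) (at (p + t *\<^sub>R v))"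
  shows "((\<lambda>t. f (p + t *\<^sub>R v)) has_derivative (\<lambda>h. h * Df v)) (at t)"
proof -
  have "((\<lambda>t. p + t *\<^sub>R v) has_derivative (\<lambda>h. h *\<^sub>R v)) (at t)"
    by (auto intro!: derivative_eq_intros)
  from diff_chain_at[OF this assms]
  have "((f \<circ> (\<lambda>t. p + t *\<^sub>R v)) has_derivative (Df \<circ> (\<lambda>h. h *\<^sub>R v))) (at t)" .
  moreover have "Df (h *\<^sub>R v) = h * Df v" for h
    using linear_scale[OF bounded_linear.linear[OF has_derivative_bounded_linear[OF assms]]]
    by simp
  ultimately show ?thesis by (simp add: o_def)
qed

lemma second_difference_mean_value:
  fixes f :: "'a::real_normed_vector \<Rightarrow> real"
  assumes f: "\<And>x. (f has_derivative Df x) (at x)"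
    and Df: "\<And>x. ((\<lambda>x. Df x b) has_derivative Db x) (at x)"
    and s: "0 < s"
  obtains \<tau> \<sigma> where "0 < \<tau>" "\<tau> < s" "0 < \<sigma>" "\<sigma> < s"
    "f (x + s *\<^sub>R b + s *\<^sub>R c) - f (x + s *\<^sub>R b) - f (x + s *\<^sub>R c) + f x
       = s * s * Db (x + \<tau> *\<^sub>R b + \<sigma> *\<^sub>R c) c"
proof -
  have f_cont: "continuous_on UNIV f"
    by (rule continuous_at_imp_continuous_on) (use f has_derivative_continuous in blast)
  define u where "u \<tau> = f ((x + s *\<^sub>R c) + \<tau> *\<^sub>R b) - f (x + \<tau> *\<^sub>R b)" for \<tau>
  have "continuous_on {0..s} u" unfolding u_def
    by (intro continuous_intros continuous_on_compose2[OF f_cont]) auto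
  moreover have "(u has_derivative
      (\<lambda>h. h * Df ((x + s *\<^sub>R c) + \<tau> *\<^sub>R b) b - h * Df (x + \<tau> *\<^sub>R b) b)) (at \<tau>)" for \<tau>
    unfolding u_def by (intro has_derivative_diff has_derivative_along_line f)
  ultimately obtain \<tau> where \<tau>: "0 < \<tau>" "\<tau> < s"
    "u s - u 0 = (s - 0) * Df ((x + s *\<^sub>R c) + \<tau> *\<^sub>R b) b - (s - 0) * Df (x + \<tau> *\<^sub>R b) b"
    by (rule mvt[OF s])
  define v where "v \<sigma> = Df ((x + \<tau> *\<^sub>R b) + \<sigma> *\<^sub>R c) b" for \<sigma>
  have Df_cont: "continuous_on UNIV (\<lambda>x. Df x b)"
    by (rule continuous_at_imp_continuous_on) (use Df has_derivative_continuous in blast)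
  have "continuous_on {0..s} v" unfolding v_def
    by (intro continuous_intros continuous_on_compose2[OF Df_cont]) auto
  moreover have "(v has_derivative (\<lambda>h. h * Db ((x + \<tau> *\<^sub>R b) + \<sigma> *\<^sub>R c) c)) (at \<sigma>)" for \<sigma>
    unfolding v_def by (rule has_derivative_along_line[where f="\<lambda>x. Df x b"]) (rule Df)
  ultimately obtain \<sigma> where \<sigma>: "0 < \<sigma>" "\<sigma> < s"
    "v s - v 0 = (s - 0) * Db ((x + \<tau> *\<^sub>R b) + \<sigma> *\<^sub>R c) c"
    by (rule mvt[OF s])
  have "f (x + s *\<^sub>R b + s *\<^sub>R c) - f (x + s *\<^sub>R b) - f (x + s *\<^sub>R c) + f x = u s - u 0"
    unfolding u_def by (simp add: algebra_simps)
  also have "\<dots> = s * (v s - v 0)"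
    using \<tau>(3) unfolding v_def by (simp add: algebra_simps)
  also have "\<dots> = s * s * Db (x + \<tau> *\<^sub>R b + \<sigma> *\<^sub>R c) c"
    using \<sigma>(3) by simp
  finally show ?thesis using that \<tau>(1,2) \<sigma>(1,2) by blast
qed

lemma tendsto_at_right_by_mean_values:
  fixes D :: "'a::real_normed_vector \<Rightarrow> real"
  assumes mean: "\<And>s. 0 < s \<Longrightarrow> \<exists>\<tau> \<sigma>. 0 < \<tau> \<and> \<tau> < s \<and> 0 < \<sigma> \<and> \<sigma> < s \<and>
      q s = D (x + \<tau> *\<^sub>R u + \<sigma> *\<^sub>R v)"
    and cont: "isCont D x"
  shows "(q \<longlongrightarrow> D x) (at_right 0)"
proof -
  obtain \<tau> \<sigma> where \<tau>\<sigma>: "\<And>s. 0 < s \<Longrightarrow> 0 < \<tau> s \<and> \<tau> s < s \<and> 0 < \<sigma> s \<and> \<sigma> s < s \<and>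
      q s = D (x + \<tau> s *\<^sub>R u + \<sigma> s *\<^sub>R v)"
    using mean by metis
  have pos: "\<forall>\<^sub>F s in at_right (0::real). 0 < s"
    by (rule eventually_at_right_less)
  have to_0: "(g \<longlongrightarrow> 0) (at_right 0)" if "\<And>s. 0 < s \<Longrightarrow> 0 < g s \<and> g s < s"
    for g :: "real \<Rightarrow> real"
  proof (rule tendsto_sandwich[of "\<lambda>_. 0" _ _ "\<lambda>s. s"])
    show "\<forall>\<^sub>F s in at_right 0. 0 \<le> g s" "\<forall>\<^sub>F s in at_right 0. g s \<le> s"
      using that by (auto intro: eventually_mono[OF pos] less_imp_le)
  qed (auto intro: tendsto_ident_at)
  have "((\<lambda>s. x + \<tau> s *\<^sub>R u + \<sigma> s *\<^sub>R v) \<longlongrightarrow> x + 0 *\<^sub>R u + 0 *\<^sub>R v) (at_right 0)"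
    using \<tau>\<sigma> by (intro tendsto_intros to_0) auto
  then have "((\<lambda>s. D (x + \<tau> s *\<^sub>R u + \<sigma> s *\<^sub>R v)) \<longlongrightarrow> D x) (at_right 0)"
    using isCont_tendsto_compose[OF cont] by simp
  moreover have "\<forall>\<^sub>F s in at_right 0. D (x + \<tau> s *\<^sub>R u + \<sigma> s *\<^sub>R v) = q s"
    using \<tau>\<sigma> by (auto intro: eventually_mono[OF pos])
  ultimately show ?thesis by (rule Lim_transform_eventually)
qed

text \<open>Both mixed second derivatives are limits of the same second difference quotient.\<close>
lemma second_derivative_symmetric:
  fixes f :: "'a::real_normed_vector \<Rightarrow> real"
  assumes f: "\<And>x. (f has_derivative Df x) (at x)"
    and Df_b: "\<And>x. ((\<lambda>x. Df x b) has_derivative Db x) (at x)"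
    and Df_c: "\<And>x. ((\<lambda>x. Df x c) has_derivative Dc x) (at x)"
    and cont_b: "isCont (\<lambda>x. Db x c) x" and cont_c: "isCont (\<lambda>x. Dc x b) x"
  shows "Db x c = Dc x b"
proof -
  define \<Delta> where "\<Delta> s = f (x + s *\<^sub>R b + s *\<^sub>R c) - f (x + s *\<^sub>R b) - f (x + s *\<^sub>R c) + f x"
    for s
  have "((\<lambda>s. \<Delta> s / (s * s)) \<longlongrightarrow> Db x c) (at_right 0)"
  proof (rule tendsto_at_right_by_mean_values[where u = b and v = c, OF _ cont_b])
    fix s :: real assume "0 < s"
    then obtain \<tau> \<sigma> where "0 < \<tau>" "\<tau> < s" "0 < \<sigma>" "\<sigma> < s"
      "\<Delta> s = s * s * Db (x + \<tau> *\<^sub>R b + \<sigma> *\<^sub>R c) c"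
      unfolding \<Delta>_def by (rule second_difference_mean_value[OF f Df_b])
    with \<open>0 < s\<close> show "\<exists>\<tau> \<sigma>. 0 < \<tau> \<and> \<tau> < s \<and> 0 < \<sigma> \<and> \<sigma> < s \<and>
        \<Delta> s / (s * s) = Db (x + \<tau> *\<^sub>R b + \<sigma> *\<^sub>R c) c"
      by auto
  qed
  moreover have "((\<lambda>s. \<Delta> s / (s * s)) \<longlongrightarrow> Dc x b) (at_right 0)"
  proof (rule tendsto_at_right_by_mean_values[where u = c and v = b, OF _ cont_c])
    fix s :: real assume "0 < s"
    then obtain \<tau> \<sigma> where "0 < \<tau>" "\<tau> < s" "0 < \<sigma>" "\<sigma> < s"
      "f (x + s *\<^sub>R c + s *\<^sub>R b) - f (x + s *\<^sub>R c) - f (x + s *\<^sub>R b) + f x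
        = s * s * Dc (x + \<tau> *\<^sub>R c + \<sigma> *\<^sub>R b) b"
      by (rule second_difference_mean_value[OF f Df_c])
    moreover have "\<Delta> s = f (x + s *\<^sub>R c + s *\<^sub>R b) - f (x + s *\<^sub>R c) - f (x + s *\<^sub>R b) + f x"
      unfolding \<Delta>_def by (simp add: algebra_simps)
    ultimately show "\<exists>\<tau> \<sigma>. 0 < \<tau> \<and> \<tau> < s \<and> 0 < \<sigma> \<and> \<sigma> < s \<and>
        \<Delta> s / (s * s) = Dc (x + \<tau> *\<^sub>R c + \<sigma> *\<^sub>R b) b"
      using \<open>0 < s\<close> by auto
  qed
  ultimately show ?thesis by (rule tendsto_unique[OF trivial_limit_at_right_real])
qed

lemma smooth_fun_has_derivative_iter_deriv:
  assumes "smooth_fun f"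
  shows "(iter_deriv vs f has_derivative (\<lambda>v. iter_deriv (v # vs) f x)) (at x)"
  using assms frechet_derivative_works unfolding smooth_fun_def by auto

lemma smooth_fun_iter_deriv_swap:
  assumes f: "smooth_fun f"
  shows "iter_deriv [c, b] f x = iter_deriv [b, c] f x"
proof -
  have "(f has_derivative frechet_derivative f (at x)) (at x)" for x
    using smooth_fun_has_derivative_iter_deriv[OF f, of "[]"] by simp
  moreover have "((\<lambda>x. frechet_derivative f (at x) v) has_derivative (\<lambda>u. iter_deriv [u, v] f x))
      (at x)" for v x
    using smooth_fun_has_derivative_iter_deriv[OF f, of "[v]"] by simp
  moreover have "isCont (iter_deriv vs f) x" for vs
    using f unfolding smooth_fun_def by (simp add: continuous_on_eq_continuous_at)
  ultimately show ?thesis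
    by (intro second_derivative_symmetric[where Df = "\<lambda>x. frechet_derivative f (at x)"])
qed

lemma inner_sum_Basis_linear:
  fixes \<phi> :: "'a::euclidean_space \<Rightarrow> real"
  assumes "linear \<phi>"
  shows "inner (\<Sum>b\<in>Basis. \<phi> b *\<^sub>R b) q = \<phi> q"
proof -
  have "inner (\<Sum>b\<in>Basis. \<phi> b *\<^sub>R b) q = (\<Sum>b\<in>Basis. (q \<bullet> b) * \<phi> b)"
    unfolding inner_sum_left by (intro sum.cong) (simp_all add: inner_commute)
  also have "\<dots> = \<phi> (\<Sum>b\<in>Basis. (q \<bullet> b) *\<^sub>R b)"
    by (simp add: linear_sum[OF assms] linear_scale[OF assms])
  finally show ?thesis by (simp add: euclidean_representation)
qed

definition hessian :: "('a::euclidean_space \<Rightarrow> real) \<Rightarrow> 'a \<Rightarrow> 'a \<Rightarrow> 'a" where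
  "hessian f x p = (\<Sum>b\<in>Basis. iter_deriv [p, b] f x *\<^sub>R b)"

lemma has_derivative_grad:
  assumes "smooth_fun f"
  shows "(grad f has_derivative hessian f x) (at x)"
proof -
  have "grad f = (\<lambda>x. \<Sum>b\<in>Basis. iter_deriv [b] f x *\<^sub>R b)"
    unfolding grad_def by auto
  then show ?thesis
    unfolding hessian_def[abs_def]
    by (simp only:) (intro has_derivative_sum has_derivative_scaleR_left
        smooth_fun_has_derivative_iter_deriv assms)
qed

lemma inner_hessian:
  assumes f: "smooth_fun f"
  shows "inner (hessian f x p) q = iter_deriv [q, p] f x"
proof -
  have "linear (\<lambda>b. iter_deriv [b, p] f x)"
    using has_derivative_linear[OF smooth_fun_has_derivative_iter_deriv[OF f, of "[p]"]] .
  then show ?thesis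
    unfolding hessian_def using smooth_fun_iter_deriv_swap[OF f]
    by (simp add: inner_sum_Basis_linear)
qed

lemma hessian_symmetric:
  assumes "smooth_fun f"
  shows "inner (hessian f x p) q = inner p (hessian f x q)"
  using inner_hessian[OF assms] smooth_fun_iter_deriv_swap[OF assms] by (simp add: inner_commute)

lemma continuous_on_hessian:
  assumes "smooth_fun f"
  shows "continuous_on UNIV (\<lambda>x. hessian f x p)"
proof -
  have "continuous_on UNIV (iter_deriv vs f)" for vs
    using assms unfolding smooth_fun_def by blast
  then show ?thesis unfolding hessian_def by (intro continuous_intros)
qed

lemma hamiltonian_field_derivative:
  fixes H :: "('n::finite) phase_space \<Rightarrow> real"
  assumes H: "smooth_fun H"
  obtains DF where "\<And>w. ((\<lambda>w. Jmat (grad H w)) has_derivative blinfun_apply (DF w)) (at w)"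
    and "continuous_on UNIV DF"
    and "\<And>w p q. w0 (DF w p) q + w0 p (DF w q) = 0"
proof -
  have F_deriv: "((\<lambda>w. Jmat (grad H w)) has_derivative (\<lambda>p. Jmat (hessian H x p))) (at x)" for x
    by (rule bounded_linear.has_derivative[OF bounded_linear_Jmat has_derivative_grad[OF H]])
  define DF where "DF x = Blinfun (\<lambda>p. Jmat (hessian H x p))" for x
  have DF_apply: "blinfun_apply (DF x) = (\<lambda>p. Jmat (hessian H x p))" for x
    unfolding DF_def using has_derivative_bounded_linear[OF F_deriv]
    by (simp add: bounded_linear_Blinfun_apply)
  show ?thesis
  proof
    show "((\<lambda>w. Jmat (grad H w)) has_derivative blinfun_apply (DF w)) (at w)" for w
      using F_deriv by (simp add: DF_apply)
    show "continuous_on UNIV DF"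
    proof (rule continuous_on_blinfun_componentwise)
      show "continuous_on UNIV (\<lambda>x. blinfun_apply (DF x) p)" for p
        unfolding DF_apply
        by (rule linear_continuous_on_compose[OF continuous_on_hessian[OF H] linear_Jmat])
    qed
    show "w0 (DF w p) q + w0 p (DF w q) = 0" for w p q
      unfolding DF_apply w0_def using hessian_symmetric[OF H, of w p q] by simp
  qed
qed

section \<open>Linear differential equations\<close>

lemma first_zero_crossing:
  fixes g :: "real \<Rightarrow> real"
  assumes g: "continuous_on {0..t} g" and "0 \<le> t" "g 0 < 0" "0 \<le> g t"
  obtains s where "0 < s" "s \<le> t" "g s = 0" "\<And>r. 0 \<le> r \<Longrightarrow> r < s \<Longrightarrow> g r < 0"
proof -
  define S where "S = {r \<in> {0..t}. 0 \<le> g r}"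
  have "closed S"
    unfolding S_def using continuous_closed_preimage[OF g closed_atLeastAtMost, of "{0..}"]
    by (simp add: vimage_def Int_def)
  moreover have "t \<in> S" "bdd_below S"
    using assms(2-4) unfolding S_def by (auto intro: bdd_belowI[of _ 0] order.strict_trans2)
  ultimately have s: "Inf S \<in> S" using closed_contains_Inf by blast
  have below: "g r < 0" if "0 \<le> r" "r < Inf S" for r
    using that s cInf_lower[OF _ \<open>bdd_below S\<close>, of r] unfolding S_def by force
  have "Inf S \<noteq> 0" using s assms(3) unfolding S_def by auto
  then have pos: "0 < Inf S" using s unfolding S_def by auto
  have "continuous_on {0..Inf S} g"
    by (rule continuous_on_subset[OF g]) (use s in \<open>auto simp: S_def\<close>)
  then have "\<exists>r\<ge>0. r \<le> Inf S \<and> g r = 0"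
    by (rule IVT'[of g 0 0 "Inf S", rotated 3]) (use assms(3) s pos in \<open>auto simp: S_def\<close>)
  then obtain r where r: "0 \<le> r" "r \<le> Inf S" "g r = 0" by blast
  have "\<not> r < Inf S" using below[OF r(1)] r(3) by auto
  then have "r = Inf S" using r(2) by simp
  show ?thesis
  proof (rule that[OF pos])
    show "Inf S \<le> t" using s unfolding S_def by simp
    show "g (Inf S) = 0" using r(3) \<open>r = Inf S\<close> by simp
  qed (rule below)
qed

lemma inner_le_of_norm_le:
  fixes x y :: "'a::real_inner"
  assumes "norm x < a" and "norm y \<le> b"
  shows "inner x y \<le> a * b"
proof -
  have "norm x * norm y \<le> a * b"
    using assms norm_ge_zero[of x] norm_ge_zero[of y] by (intro mult_mono) linarith+
  then show ?thesis using norm_cauchy_schwarz[of x y] by linarith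
qed

lemma norm_less_barrier:
  fixes w :: "real \<Rightarrow> 'a::real_inner" and \<beta> :: "real \<Rightarrow> real"
  assumes w: "continuous_on {0..T} w" "\<And>t. 0 < t \<Longrightarrow> t < T \<Longrightarrow> (w has_vector_derivative w' t) (at t)"
    and \<beta>: "continuous_on {0..T} \<beta>" "\<And>t. 0 < t \<Longrightarrow> t < T \<Longrightarrow> (\<beta> has_real_derivative \<beta>' t) (at t)"
    and start: "norm (w 0) < \<beta> 0"
    and slope: "\<And>t. 0 < t \<Longrightarrow> t < T \<Longrightarrow> norm (w t) < \<beta> t \<Longrightarrow> norm (w' t) \<le> \<beta>' t"
    and t: "t \<in> {0..T}"
  shows "norm (w t) < \<beta> t"
proof (rule ccontr)
  assume "\<not> norm (w t) < \<beta> t"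
  then have crossed: "0 \<le> norm (w t) - \<beta> t" by simp
  have "continuous_on {0..t} (\<lambda>s. norm (w s) - \<beta> s)"
    using t by (intro continuous_intros continuous_on_subset[OF w(1)]
        continuous_on_subset[OF \<beta>(1)]) auto
  then obtain s where s: "0 < s" "s \<le> t" "norm (w s) - \<beta> s = 0"
    and before: "\<And>r. 0 \<le> r \<Longrightarrow> r < s \<Longrightarrow> norm (w r) - \<beta> r < 0"
    by (rule first_zero_crossing) (use start t crossed in auto)
  define \<phi> where "\<phi> r = inner (w r) (w r) - \<beta> r * \<beta> r" for r
  have "continuous_on {0..s} \<phi>"
    unfolding \<phi>_def using s t
    by (intro continuous_intros continuous_on_subset[OF w(1)] continuous_on_subset[OF \<beta>(1)]) auto
  moreover have "(\<phi> has_derivative (\<lambda>h. h * (2 * inner (w r) (w' r) - 2 * \<beta> r * \<beta>' r))) (at r)"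
    if "0 < r" "r < s" for r
  proof -
    have "r < T" using that s t by auto
    then have wd: "(w has_derivative (\<lambda>h. h *\<^sub>R w' r)) (at r)"
      and \<beta>d: "(\<beta> has_derivative (\<lambda>h. \<beta>' r * h)) (at r)"
      using w(2)[OF that(1)] \<beta>(2)[OF that(1)]
      by (simp_all add: has_vector_derivative_def has_field_derivative_def)
    show ?thesis
      unfolding \<phi>_def
      by (rule has_derivative_eq_rhs[OF has_derivative_diff[OF has_derivative_inner[OF wd wd]
            has_derivative_mult[OF \<beta>d \<beta>d]]])
        (simp add: fun_eq_iff algebra_simps inner_commute)
  qed
  ultimately obtain r where r: "0 < r" "r < s"
    and mvt_eq: "\<phi> s - \<phi> 0 = (s - 0) * (2 * inner (w r) (w' r) - 2 * \<beta> r * \<beta>' r)"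
    by (rule mvt[OF s(1)])
  have "norm (w r) < \<beta> r" using before r by simp
  then have "inner (w r) (w' r) \<le> \<beta> r * \<beta>' r"
    using slope[OF r(1)] r s t by (intro inner_le_of_norm_le) auto
  then have "s * (2 * inner (w r) (w' r) - 2 * \<beta> r * \<beta>' r) \<le> 0"
    using s(1) by (intro mult_nonneg_nonpos) auto
  then have "\<phi> s \<le> \<phi> 0" using mvt_eq by simp
  moreover have "\<phi> s = 0"
    unfolding \<phi>_def using s(3) by (simp add: dot_square_norm power2_eq_square)
  moreover have "\<phi> 0 < 0"
    using start unfolding \<phi>_def by (simp add: dot_square_norm power2_eq_square mult_strict_mono')
  ultimately show False by simp
qed

lemma norm_less_exp_barrier:
  fixes w :: "real \<Rightarrow> 'a::real_inner"
  assumes w: "continuous_on {0..T} w" "\<And>t. 0 < t \<Longrightarrow> t < T \<Longrightarrow> (w has_vector_derivative w' t) (at t)"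
    and L: "0 \<le> L" and a: "0 \<le> a" and start: "norm (w 0) < c"
    and growth: "\<And>t. 0 < t \<Longrightarrow> t < T \<Longrightarrow> norm (w t) < (c + a * t) * exp (L * t) \<Longrightarrow>
        norm (w' t) \<le> a + L * norm (w t)"
    and t: "t \<in> {0..T}"
  shows "norm (w t) < (c + a * t) * exp (L * t)"
proof (rule norm_less_barrier[OF w _ _ _ _ t])
  show "((\<lambda>t. (c + a * t) * exp (L * t)) has_real_derivative
      a * exp (L * t) + L * ((c + a * t) * exp (L * t))) (at t)" for t
    by (auto intro!: derivative_eq_intros simp: algebra_simps)
  show "norm (w' t) \<le> a * exp (L * t) + L * ((c + a * t) * exp (L * t))"
    if "0 < t" "t < T" "norm (w t) < (c + a * t) * exp (L * t)" for t
  proof -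
    have "1 \<le> exp (L * t)" using L that(1) by simp
    then have "a \<le> a * exp (L * t)" using mult_left_mono[OF _ a] by fastforce
    moreover have "L * norm (w t) \<le> L * ((c + a * t) * exp (L * t))"
      using L that(3) by (simp add: mult_left_mono)
    ultimately show ?thesis using growth[OF that] by linarith
  qed
  show "continuous_on {0..T} (\<lambda>t. (c + a * t) * exp (L * t))"
    by (intro continuous_intros)
  show "norm (w 0) < (c + a * 0) * exp (L * 0)" using start by simp
qed

definition solves_linear_ode ::
    "(real \<Rightarrow> 'a::real_normed_vector \<Rightarrow>\<^sub>L 'a) \<Rightarrow> real \<Rightarrow> 'a \<Rightarrow> (real \<Rightarrow> 'a) \<Rightarrow> bool" where
  "solves_linear_ode A T h y \<longleftrightarrow> continuous_on {0..T} y \<and> y 0 = h \<and>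
     (\<forall>t\<in>{0<..<T}. (y has_vector_derivative A t (y t)) (at t))"

lemma norm_blinfun_apply_le: "norm A \<le> L \<Longrightarrow> norm (blinfun_apply A x) \<le> L * norm x"
  by (meson norm_blinfun mult_right_mono norm_ge_zero order_trans)

lemma solves_linear_ode_unique:
  fixes A :: "real \<Rightarrow> 'a::real_inner \<Rightarrow>\<^sub>L 'a"
  assumes bound: "\<And>t. t \<in> {0..T} \<Longrightarrow> norm (A t) \<le> L"
    and y1: "solves_linear_ode A T h y1" and y2: "solves_linear_ode A T h y2" and t: "t \<in> {0..T}"
  shows "y1 t = y2 t"
proof (rule ccontr)
  assume "y1 t \<noteq> y2 t"
  have L: "0 \<le> L" using bound[OF t] norm_ge_zero order_trans by blast
  have "norm (y1 t - y2 t) < (norm (y1 t - y2 t) / exp (L * t) + 0 * t) * exp (L * t)"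
  proof (rule norm_less_exp_barrier[OF _ _ L order.refl _ _ t])
    show "continuous_on {0..T} (\<lambda>s. y1 s - y2 s)"
      using y1 y2 unfolding solves_linear_ode_def by (intro continuous_on_diff) auto
    show "((\<lambda>s. y1 s - y2 s) has_vector_derivative A s (y1 s) - A s (y2 s)) (at s)"
      if "0 < s" "s < T" for s
      using y1 y2 that unfolding solves_linear_ode_def by (intro has_vector_derivative_diff) auto
    show "norm (A s (y1 s) - A s (y2 s)) \<le> 0 + L * norm (y1 s - y2 s)" if "0 < s" "s < T" for s
      using norm_blinfun_apply_le[OF bound[of s], of "y1 s - y2 s"] that
      by (simp add: blinfun.diff_right)
  qed (use y1 y2 \<open>y1 t \<noteq> y2 t\<close> in \<open>simp add: solves_linear_ode_def\<close>)
  then show False by simp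
qed

lemma solves_linear_ode_add:
  assumes "solves_linear_ode A T h y" and "solves_linear_ode A T k u"
  shows "solves_linear_ode A T (h + k) (\<lambda>t. y t + u t)"
  using assms unfolding solves_linear_ode_def
  by (simp add: continuous_on_add has_vector_derivative_add blinfun.add_right)

lemma solves_linear_ode_scaleR:
  assumes "solves_linear_ode A T h y"
  shows "solves_linear_ode A T (c *\<^sub>R h) (\<lambda>t. c *\<^sub>R y t)"
  using assms unfolding solves_linear_ode_def
  by (simp add: continuous_on_scaleR blinfun.scaleR_right
      bounded_linear.has_vector_derivative[OF bounded_linear_scaleR_right])

fun picard_iterate :: "(real \<Rightarrow> 'a::euclidean_space \<Rightarrow>\<^sub>L 'a) \<Rightarrow> 'a \<Rightarrow> nat \<Rightarrow> real \<Rightarrow> 'a" where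
  "picard_iterate A h 0 = (\<lambda>t. h)"
| "picard_iterate A h (Suc k) = (\<lambda>t. h + integral {0..t} (\<lambda>s. A s (picard_iterate A h k s)))"

lemma continuous_on_picard_iterate:
  assumes "continuous_on {0..T} A"
  shows "continuous_on {0..T} (picard_iterate A h k)"
proof (induction k)
  case (Suc k)
  have "(\<lambda>s. A s (picard_iterate A h k s)) integrable_on {0..T}"
    using assms Suc by (intro integrable_continuous_real continuous_intros)
  then show ?case by (auto intro!: continuous_intros indefinite_integral_continuous_1)
qed simp

lemma has_integral_exp_2L:
  fixes t L :: real
  assumes "0 \<le> t" "0 < L"
  shows "((\<lambda>s. exp (2 * L * s)) has_integral (exp (2 * L * t) - 1) / (2 * L)) {0..t}"
proof -
  have "((\<lambda>s. exp (2 * L * s)) has_integral exp (2 * L * t) / (2 * L) - exp (2 * L * 0) / (2 * L))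
      {0..t}"
    using assms
    by (intro fundamental_theorem_of_calculus)
      (auto intro!: derivative_eq_intros
        simp: has_real_derivative_iff_has_vector_derivative[symmetric])
  then show ?thesis by (simp add: diff_divide_distrib)
qed

text \<open>The weight \<open>exp (2 L s)\<close> makes each integration halve the bound, so the Picard
  differences are dominated by a geometric series on the whole interval.\<close>
lemma norm_integral_blinfun_le_halved:
  fixes A :: "real \<Rightarrow> 'a::euclidean_space \<Rightarrow>\<^sub>L 'a"
  assumes t: "0 \<le> t" and L: "0 < L" and bound: "\<And>s. s \<in> {0..t} \<Longrightarrow> norm (A s) \<le> L"
    and cont: "continuous_on {0..t} A" "continuous_on {0..t} u"
    and u: "\<And>s. s \<in> {0..t} \<Longrightarrow> norm (u s) \<le> B * exp (2 * L * s)"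
  shows "norm (integral {0..t} (\<lambda>s. A s (u s))) \<le> B / 2 * exp (2 * L * t)"
proof -
  have B: "0 \<le> B" using u[of 0] t norm_ge_zero[of "u 0"] by (simp del: norm_ge_zero)
  have int: "((\<lambda>s. L * B * exp (2 * L * s)) has_integral L * B * ((exp (2 * L * t) - 1) / (2 * L)))
      {0..t}"
    by (rule has_integral_mult_right[OF has_integral_exp_2L[OF t L]])
  have "norm (integral {0..t} (\<lambda>s. A s (u s))) \<le> integral {0..t} (\<lambda>s. L * B * exp (2 * L * s))"
  proof (rule integral_norm_bound_integral)
    show "(\<lambda>s. A s (u s)) integrable_on {0..t}"
      using cont by (intro integrable_continuous_real continuous_intros)
    show "norm (A s (u s)) \<le> L * B * exp (2 * L * s)" if "s \<in> {0..t}" for s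
      using order_trans[OF norm_blinfun_apply_le[OF bound[OF that]]
          mult_left_mono[OF u[OF that] less_imp_le[OF L]]]
      by (simp add: mult.assoc)
  qed (use int in blast)
  also have "\<dots> = B / 2 * (exp (2 * L * t) - 1)"
    unfolding integral_unique[OF int] using L by (simp add: field_simps)
  also have "\<dots> \<le> B / 2 * exp (2 * L * t)" using B by (simp add: mult_left_mono)
  finally show ?thesis .
qed

lemma norm_picard_iterate_diff_le:
  assumes cont: "continuous_on {0..T} A" and L: "0 < L"
    and bound: "\<And>t. t \<in> {0..T} \<Longrightarrow> norm (A t) \<le> L" and t: "t \<in> {0..T}"
  shows "norm (picard_iterate A h (Suc k) t - picard_iterate A h k t)
    \<le> norm h / 2 ^ Suc k * exp (2 * L * t)"
  using t
proof (induction k arbitrary: t)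
  case 0
  have "norm (integral {0..t} (\<lambda>s. A s h)) \<le> norm h / 2 * exp (2 * L * t)"
    using 0 L bound by (intro norm_integral_blinfun_le_halved continuous_on_subset[OF cont])
      (auto simp: mult_le_cancel_left1)
  then show ?case by simp
next
  case (Suc k)
  let ?P = "picard_iterate A h"
  have sub: "{0..t} \<subseteq> {0..T}" using Suc.prems by auto
  have cont_t: "continuous_on {0..t} A" "continuous_on {0..t} (?P j)" for j
    using continuous_on_subset[OF cont sub]
      continuous_on_subset[OF continuous_on_picard_iterate[OF cont] sub] by auto
  have int: "(\<lambda>s. A s (?P j s)) integrable_on {0..t}" for j
    using cont_t by (intro integrable_continuous_real continuous_intros)
  have "?P (Suc (Suc k)) t - ?P (Suc k) t = integral {0..t} (\<lambda>s. A s (?P (Suc k) s - ?P k s))"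
    using integral_diff[OF int int, of "Suc k" k] by (simp add: blinfun.diff_right)
  also have "norm \<dots> \<le> norm h / 2 ^ Suc k / 2 * exp (2 * L * t)"
    using Suc L bound
    by (intro norm_integral_blinfun_le_halved continuous_on_diff cont_t) auto
  finally show ?case by simp
qed

lemma uniform_limit_picard_iterate:
  fixes A :: "real \<Rightarrow> 'a::euclidean_space \<Rightarrow>\<^sub>L 'a"
  assumes cont: "continuous_on {0..T} A"
  obtains y where "uniform_limit {0..T} (picard_iterate A h) y sequentially"
proof -
  obtain L where L: "0 < L" "\<And>t. t \<in> {0..T} \<Longrightarrow> norm (A t) \<le> L"
    using compact_imp_bounded[OF compact_continuous_image[OF cont compact_Icc]]
    unfolding bounded_pos by auto
  define d where "d i t = picard_iterate A h (Suc i) t - picard_iterate A h i t" for i t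
  have "norm (d i t) \<le> norm h * exp (2 * L * T) / 2 * (1 / 2) ^ i" if t: "t \<in> {0..T}" for i t
  proof -
    have "norm (d i t) \<le> norm h / 2 ^ Suc i * exp (2 * L * t)"
      unfolding d_def by (rule norm_picard_iterate_diff_le[OF cont L t])
    also have "\<dots> \<le> norm h / 2 ^ Suc i * exp (2 * L * T)"
      using t L by (intro mult_left_mono) auto
    finally show ?thesis by (simp add: power_one_over field_simps)
  qed
  then have "uniform_limit {0..T} (\<lambda>n t. \<Sum>i<n. d i t) (\<lambda>t. \<Sum>i. d i t) sequentially"
    by (intro Weierstrass_m_test[where M="\<lambda>i. norm h * exp (2 * L * T) / 2 * (1 / 2) ^ i"]
        summable_mult summable_geometric) auto
  then have "uniform_limit {0..T} (\<lambda>n t. h + (\<Sum>i<n. d i t)) (\<lambda>t. h + (\<Sum>i. d i t)) sequentially"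
    by (intro uniform_limit_intros)
  moreover have "h + (\<Sum>i<n. d i t) = picard_iterate A h n t" for n t
    unfolding d_def using sum_lessThan_telescope[of "\<lambda>i. picard_iterate A h i t" n] by simp
  then have "(\<lambda>n t. h + (\<Sum>i<n. d i t)) = picard_iterate A h" by auto
  ultimately show ?thesis using that by metis
qed

lemma continuous_on_picard_limit:
  assumes "continuous_on {0..T} A"
    and "uniform_limit {0..T} (picard_iterate A h) y sequentially"
  shows "continuous_on {0..T} y"
  by (rule uniform_limit_theorem[OF _ assms(2)])
    (auto intro: always_eventually continuous_on_picard_iterate[OF assms(1)])

lemma picard_limit_integral_eq:
  fixes A :: "real \<Rightarrow> 'a::euclidean_space \<Rightarrow>\<^sub>L 'a"
  assumes cont: "continuous_on {0..T} A"
    and lim: "uniform_limit {0..T} (picard_iterate A h) y sequentially" and t: "t \<in> {0..T}"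
  shows "y t = h + integral {0..t} (\<lambda>s. A s (y s))"
proof -
  have sub: "{0..t} \<subseteq> {0..T}" using t by auto
  have cont_t: "continuous_on {0..t} A" "continuous_on {0..t} y"
    using continuous_on_subset[OF cont sub]
      continuous_on_subset[OF continuous_on_picard_limit[OF cont lim] sub] .
  have "uniform_limit {0..t} (\<lambda>n s. A s (picard_iterate A h n s)) (\<lambda>s. A s (y s)) sequentially"
    using compact_imp_bounded[OF compact_continuous_image[OF cont_t(1) compact_Icc]]
      compact_imp_bounded[OF compact_continuous_image[OF cont_t(2) compact_Icc]]
    by (intro blinfun.bounded_uniform_limit uniform_limit_const uniform_limit_on_subset[OF lim sub])
  moreover have "continuous_on {0..t} (\<lambda>s. A s (picard_iterate A h n s))" for n
    using cont_t(1) continuous_on_subset[OF continuous_on_picard_iterate[OF cont] sub]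
    by (intro continuous_intros)
  ultimately obtain I J
    where I: "\<And>n. ((\<lambda>s. A s (picard_iterate A h n s)) has_integral I n) {0..t}"
      and J: "((\<lambda>s. A s (y s)) has_integral J) {0..t}" and IJ: "I \<longlonglongrightarrow> J"
    by (rule uniform_limit_integral) auto
  have "integral {0..t} (\<lambda>s. A s (picard_iterate A h n s)) = I n" for n
    using I by (rule integral_unique)
  then have "(\<lambda>n. picard_iterate A h (Suc n) t) \<longlonglongrightarrow> h + J"
    by (simp add: tendsto_add[OF tendsto_const IJ])
  moreover have "(\<lambda>n. picard_iterate A h (Suc n) t) \<longlonglongrightarrow> y t"
    using tendsto_uniform_limitI[OF lim t] by (rule LIMSEQ_Suc)
  ultimately show ?thesis using J LIMSEQ_unique integral_unique by metis
qed

lemma solves_linear_ode_of_integral_eq: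
  fixes A :: "real \<Rightarrow> 'a::euclidean_space \<Rightarrow>\<^sub>L 'a"
  assumes T: "0 \<le> T" and cont: "continuous_on {0..T} A" "continuous_on {0..T} y"
    and integral_eq: "\<And>t. t \<in> {0..T} \<Longrightarrow> y t = h + integral {0..t} (\<lambda>s. A s (y s))"
  shows "solves_linear_ode A T h y"
proof -
  have "(y has_vector_derivative A t (y t)) (at t)" if t: "t \<in> {0<..<T}" for t
  proof -
    have tT: "t \<in> {0..T}" using t by auto
    have "continuous_on {0..T} (\<lambda>s. A s (y s))" using cont by (intro continuous_intros)
    from integral_has_vector_derivative[OF this tT]
    have "((\<lambda>u. h + integral {0..u} (\<lambda>s. A s (y s))) has_vector_derivative A t (y t))
        (at t within {0..T})"
      by (auto intro!: derivative_eq_intros)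
    then have "(y has_vector_derivative A t (y t)) (at t within {0..T})"
      by (rule has_vector_derivative_transform[OF tT integral_eq, rotated])
    then show ?thesis using t at_within_Icc_at[of 0 t T] by simp
  qed
  moreover have "y 0 = h" using integral_eq[of 0] T by simp
  ultimately show ?thesis using cont unfolding solves_linear_ode_def by blast
qed

lemma solves_linear_ode_exists:
  fixes A :: "real \<Rightarrow> 'a::euclidean_space \<Rightarrow>\<^sub>L 'a"
  assumes "0 \<le> T" and "continuous_on {0..T} A"
  obtains y where "solves_linear_ode A T h y"
proof -
  obtain y where lim: "uniform_limit {0..T} (picard_iterate A h) y sequentially"
    using uniform_limit_picard_iterate[OF assms(2)] by blast
  show ?thesis
    by (rule that, rule solves_linear_ode_of_integral_eq[OF assms
          continuous_on_picard_limit[OF assms(2) lim] picard_limit_integral_eq[OF assms(2) lim]])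
qed

section \<open>Differentiability of the flow\<close>

lemma continuous_blinfun_bounded_near_compact:
  fixes DF :: "'a::euclidean_space \<Rightarrow> 'a \<Rightarrow>\<^sub>L 'b::real_normed_vector"
  assumes K: "compact K" and DF: "continuous_on UNIV DF"
  obtains L where "0 < L" "\<And>x u. x \<in> K \<Longrightarrow> norm u \<le> 1 \<Longrightarrow> norm (DF (x + u)) \<le> L"
proof -
  obtain L where L: "0 < L"
    and bound: "\<And>y. y \<in> DF ` {x + u | x u. x \<in> K \<and> u \<in> cball 0 1} \<Longrightarrow> norm y \<le> L"
    using compact_imp_bounded[OF compact_continuous_image[OF continuous_on_subset[OF DF]
          compact_sums[OF K compact_cball[of 0 1]]]]
    unfolding bounded_pos by blast
  show ?thesis
  proof (rule that[OF L])
    fix x u :: 'a assume "x \<in> K" "norm u \<le> 1"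
    then have "DF (x + u) \<in> DF ` {x + u | x u. x \<in> K \<and> u \<in> cball 0 1}" by auto
    then show "norm (DF (x + u)) \<le> L" by (rule bound)
  qed
qed

lemma norm_diff_le_of_bounded_derivative:
  fixes F :: "'a::real_normed_vector \<Rightarrow> 'b::real_normed_vector"
  assumes F: "\<And>w. (F has_derivative blinfun_apply (DF w)) (at w)"
    and bound: "\<And>u. norm u \<le> 1 \<Longrightarrow> norm (DF (x + u)) \<le> L" and u: "norm u \<le> 1"
  shows "norm (F (x + u) - F x) \<le> L * norm u"
proof -
  have "norm (F (x + u) - F x) \<le> L * norm (x + u - x)"
  proof (rule differentiable_bound[OF convex_cball])
    show "(F has_derivative blinfun_apply (DF w)) (at w within cball x 1)" for w
      using F by (rule has_derivative_at_withinI)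
    show "onorm (blinfun_apply (DF w)) \<le> L" if "w \<in> cball x 1" for w
      using bound[of "w - x"] that
        by (simp add: norm_blinfun.rep_eq[symmetric] dist_norm norm_minus_commute)
  qed (use u in \<open>auto simp: dist_norm\<close>)
  then show ?thesis by simp
qed

lemma uniform_remainder_near_compact:
  fixes F :: "'a::euclidean_space \<Rightarrow> 'b::real_normed_vector"
  assumes K: "compact K" and F: "\<And>w. (F has_derivative blinfun_apply (DF w)) (at w)"
    and DF: "continuous_on UNIV DF" and \<epsilon>: "0 < \<epsilon>"
  obtains \<delta> where "0 < \<delta>" "\<delta> \<le> 1"
    "\<And>x u. x \<in> K \<Longrightarrow> norm u < \<delta> \<Longrightarrow> norm (F (x + u) - F x - DF x u) \<le> \<epsilon> * norm u"
proof -
  define K1 where "K1 = {x + u | x u. x \<in> K \<and> u \<in> cball 0 1}"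
  have "uniformly_continuous_on K1 DF"
    unfolding K1_def
    by (rule compact_uniformly_continuous[OF continuous_on_subset[OF DF]
        compact_sums[OF K compact_cball[of 0 1]]]) simp
  then obtain d where d: "0 < d"
    "\<And>w w'. w \<in> K1 \<Longrightarrow> w' \<in> K1 \<Longrightarrow> dist w' w < d \<Longrightarrow> dist (DF w') (DF w) < \<epsilon>"
    unfolding uniformly_continuous_on_def using \<epsilon> by metis
  define \<delta> where "\<delta> = min d 1"
  have "norm (F (x + u) - F x - DF x u) \<le> \<epsilon> * norm u" if x: "x \<in> K" and u: "norm u < \<delta>" for x u
  proof -
    have near: "w \<in> K1" if "w \<in> ball x \<delta>" for w
    proof -
      have "w - x \<in> cball 0 1"
        using that by (simp add: \<delta>_def dist_norm norm_minus_commute)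
      then show ?thesis unfolding K1_def using x by force
    qed
    have "x \<in> K1" using near[of x] d(1) by (simp add: \<delta>_def)
    have "norm ((F (x + u) - DF x (x + u)) - (F x - DF x x)) \<le> \<epsilon> * norm (x + u - x)"
    proof (rule differentiable_bound[OF convex_ball])
      show "((\<lambda>w. F w - DF x w) has_derivative blinfun_apply (DF w - DF x)) (at w within ball x \<delta>)"
        for w
        by (rule has_derivative_at_withinI)
          (auto intro!: derivative_eq_intros F simp: blinfun.diff_left)
      show "onorm (blinfun_apply (DF w - DF x)) \<le> \<epsilon>" if "w \<in> ball x \<delta>" for w
        using d(2)[OF \<open>x \<in> K1\<close> near[OF that]] that
        by (simp add: norm_blinfun.rep_eq[symmetric] dist_norm \<delta>_def norm_minus_commute)
    qed (use u d(1) in \<open>auto simp: dist_norm \<delta>_def\<close>)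
    then show ?thesis by (simp add: blinfun.add_right algebra_simps)
  qed
  moreover have "0 < \<delta>" "\<delta> \<le> 1" using d(1) by (auto simp: \<delta>_def)
  ultimately show ?thesis using that by blast
qed

lemma continuous_on_flow:
  assumes "\<And>t. ((\<lambda>s. Phi s w) has_vector_derivative F (Phi t w)) (at t)"
  shows "continuous_on S (\<lambda>t. Phi t w)"
  by (rule continuous_at_imp_continuous_on) (use assms has_vector_derivative_continuous in blast)

lemma flow_deviation_le:
  fixes Phi :: "real \<Rightarrow> 'a::real_inner \<Rightarrow> 'a"
  assumes flow: "\<And>w t. ((\<lambda>s. Phi s w) has_vector_derivative F (Phi t w)) (at t)"
    and flow0: "\<And>w. Phi 0 w = w"
    and lip: "\<And>t u. t \<in> {0..T} \<Longrightarrow> norm u \<le> 1 \<Longrightarrow> norm (F (Phi t z + u) - F (Phi t z)) \<le> L * norm u"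
    and L: "0 \<le> L" and small: "2 * exp (L * T) * norm h \<le> 1" and t: "t \<in> {0..T}"
  shows "norm (Phi t (z + h) - Phi t z) \<le> 2 * exp (L * T) * norm h"
proof (cases "h = 0")
  case False
  have barrier_mono: "(2 * norm h + 0 * s) * exp (L * s) \<le> 2 * exp (L * T) * norm h"
    if "s \<le> T" for s
    using that L by (simp add: mult.commute mult_left_mono)
  have "norm (Phi t (z + h) - Phi t z) < (2 * norm h + 0 * t) * exp (L * t)"
  proof (rule norm_less_exp_barrier[OF _ _ L order.refl _ _ t])
    show "continuous_on {0..T} (\<lambda>t. Phi t (z + h) - Phi t z)"
      by (intro continuous_intros continuous_on_flow[OF flow])
    show "((\<lambda>t. Phi t (z + h) - Phi t z) has_vector_derivative
        F (Phi s (z + h)) - F (Phi s z)) (at s)"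
      for s by (intro derivative_intros flow)
    show "norm (F (Phi s (z + h)) - F (Phi s z)) \<le> 0 + L * norm (Phi s (z + h) - Phi s z)"
      if s: "0 < s" "s < T"
        and less: "norm (Phi s (z + h) - Phi s z) < (2 * norm h + 0 * s) * exp (L * s)"
      for s
    proof -
      have "norm (Phi s (z + h) - Phi s z) \<le> 1"
        using less barrier_mono[of s] small s by simp
      then show ?thesis using lip[of s "Phi s (z + h) - Phi s z"] s by simp
    qed
  qed (use flow0 False in simp)
  then show ?thesis using barrier_mono[of t] t by simp
qed (simp)

lemma flow_linearization_error_less:
  fixes Phi :: "real \<Rightarrow> 'a::real_inner \<Rightarrow> 'a"
  assumes flow: "\<And>w t. ((\<lambda>s. Phi s w) has_vector_derivative F (Phi t w)) (at t)"
    and flow0: "\<And>w. Phi 0 w = w"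
    and y: "solves_linear_ode (\<lambda>t. DF (Phi t z)) T h y"
    and bound: "\<And>t. t \<in> {0..T} \<Longrightarrow> norm (DF (Phi t z)) \<le> L" and L: "0 \<le> L"
    and rem: "\<And>t u. t \<in> {0..T} \<Longrightarrow> norm u < \<delta> \<Longrightarrow>
        norm (F (Phi t z + u) - F (Phi t z) - DF (Phi t z) u) \<le> \<epsilon> * norm u"
    and dev: "\<And>t. t \<in> {0..T} \<Longrightarrow> norm (Phi t (z + h) - Phi t z) \<le> C * norm h"
    and small: "C * norm h < \<delta>" and pos: "0 < \<epsilon>" "h \<noteq> 0" and T: "0 \<le> T"
  shows "norm (Phi T (z + h) - Phi T z - y T) < \<epsilon> * norm h * (1 + C * T) * exp (L * T)"
proof -
  define w where "w t = Phi t (z + h) - Phi t z" for t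
  have C: "0 \<le> C" using dev[of 0] flow0 pos(2) T by (simp add: zero_le_mult_iff)
  have "norm (w T - y T) < (\<epsilon> * norm h + \<epsilon> * C * norm h * T) * exp (L * T)"
  proof (rule norm_less_exp_barrier[OF _ _ L])
    show "0 \<le> \<epsilon> * C * norm h" using pos(1) C by simp
    show "norm (w 0 - y 0) < \<epsilon> * norm h"
      using y pos flow0 unfolding w_def solves_linear_ode_def by simp
    show "continuous_on {0..T} (\<lambda>t. w t - y t)"
      unfolding w_def using y unfolding solves_linear_ode_def
      by (intro continuous_intros continuous_on_flow[OF flow]) auto
    show "((\<lambda>t. w t - y t) has_vector_derivative
        F (Phi t (z + h)) - F (Phi t z) - DF (Phi t z) (y t)) (at t)" if "0 < t" "t < T" for t
      unfolding w_def using y that unfolding solves_linear_ode_def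
      by (intro derivative_intros flow) auto
    show "norm (F (Phi t (z + h)) - F (Phi t z) - DF (Phi t z) (y t))
        \<le> \<epsilon> * C * norm h + L * norm (w t - y t)" if t: "0 < t" "t < T" for t
    proof -
      have "F (Phi t (z + h)) - F (Phi t z) - DF (Phi t z) (y t)
          = (F (Phi t z + w t) - F (Phi t z) - DF (Phi t z) (w t)) + DF (Phi t z) (w t - y t)"
        unfolding w_def by (simp add: blinfun.diff_right)
      moreover have "norm (F (Phi t z + w t) - F (Phi t z) - DF (Phi t z) (w t)) \<le> \<epsilon> * C * norm h"
      proof -
        have "norm (w t) \<le> C * norm h" using dev[of t] t unfolding w_def by simp
        then have "\<epsilon> * norm (w t) \<le> \<epsilon> * C * norm h"
          using pos(1) by (simp add: mult.assoc)
        moreover have "norm (w t) < \<delta>" using \<open>norm (w t) \<le> C * norm h\<close> small by simp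
        ultimately show ?thesis using rem[of t "w t"] t by simp
      qed
      moreover have "norm (DF (Phi t z) (w t - y t)) \<le> L * norm (w t - y t)"
        using norm_blinfun_apply_le[OF bound] t by simp
      ultimately show ?thesis by (metis add_mono norm_triangle_le)
    qed
  qed (use T in simp)
  then show ?thesis unfolding w_def by (simp add: algebra_simps)
qed

lemma flow_remainder_small:
  fixes F :: "'a::euclidean_space \<Rightarrow> 'a" and DF :: "'a \<Rightarrow> 'a \<Rightarrow>\<^sub>L 'a"
    and Phi :: "real \<Rightarrow> 'a \<Rightarrow> 'a"
  assumes F: "\<And>w. (F has_derivative blinfun_apply (DF w)) (at w)"
    and DF: "continuous_on UNIV DF"
    and flow: "\<And>w t. ((\<lambda>s. Phi s w) has_vector_derivative F (Phi t w)) (at t)"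
    and flow0: "\<And>w. Phi 0 w = w" and T: "0 \<le> T"
    and y: "\<And>h. solves_linear_ode (\<lambda>t. DF (Phi t z)) T h (y h)" and lin: "linear (\<lambda>h. y h T)"
    and K: "compact K" and orbit: "\<And>t. t \<in> {0..T} \<Longrightarrow> Phi t z \<in> K"
    and L: "0 \<le> L" and bound: "\<And>t. t \<in> {0..T} \<Longrightarrow> norm (DF (Phi t z)) \<le> L"
    and lip: "\<And>t u. t \<in> {0..T} \<Longrightarrow> norm u \<le> 1 \<Longrightarrow> norm (F (Phi t z + u) - F (Phi t z)) \<le> L * norm u"
    and e: "0 < e"
  obtains d where "0 < d"
    "\<And>x. norm (x - z) < d \<Longrightarrow> norm (Phi T x - Phi T z - y (x - z) T) \<le> e * norm (x - z)"
proof -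
  define C where "C = 2 * exp (L * T)"
  have C: "0 < C" unfolding C_def by simp
  define \<epsilon> where "\<epsilon> = e / ((1 + C * T) * exp (L * T))"
  have CT: "0 < 1 + C * T" using C T by (simp add: add_pos_nonneg)
  then have \<epsilon>: "0 < \<epsilon>" unfolding \<epsilon>_def using e by simp
  obtain \<delta> where \<delta>: "0 < \<delta>" "\<delta> \<le> 1"
    and rem: "\<And>x u. x \<in> K \<Longrightarrow> norm u < \<delta> \<Longrightarrow> norm (F (x + u) - F x - DF x u) \<le> \<epsilon> * norm u"
    using uniform_remainder_near_compact[OF K F DF \<epsilon>] by blast
  show ?thesis
  proof (rule that[of "\<delta> / C"])
    show "0 < \<delta> / C" using \<delta> C by simp
    fix x assume x: "norm (x - z) < \<delta> / C"
    define h where "h = x - z"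
    have small: "C * norm h < \<delta>" using x C unfolding h_def by (simp add: field_simps)
    show "norm (Phi T x - Phi T z - y (x - z) T) \<le> e * norm (x - z)"
    proof (cases "h = 0")
      case True
      then show ?thesis using linear_0[OF lin] by (simp add: h_def)
    next
      case False
      have dev: "norm (Phi t (z + h) - Phi t z) \<le> C * norm h" if "t \<in> {0..T}" for t
        using flow_deviation_le[OF flow flow0 lip L _ that] small \<delta>(2) unfolding C_def by simp
      have "norm (Phi T (z + h) - Phi T z - y h T) < \<epsilon> * norm h * (1 + C * T) * exp (L * T)"
        by (rule flow_linearization_error_less[OF flow flow0 y bound L rem[OF orbit] dev small \<epsilon>
              False T])
      also have "\<dots> = (\<epsilon> * ((1 + C * T) * exp (L * T))) * norm h" by (simp add: ac_simps)
      also have "\<dots> = e * norm h" unfolding \<epsilon>_def using CT by simp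
      finally show ?thesis unfolding h_def by simp
    qed
  qed
qed

lemma flow_has_derivative_variational:
  fixes F :: "'a::euclidean_space \<Rightarrow> 'a" and DF :: "'a \<Rightarrow> 'a \<Rightarrow>\<^sub>L 'a"
    and Phi :: "real \<Rightarrow> 'a \<Rightarrow> 'a"
  assumes F: "\<And>w. (F has_derivative blinfun_apply (DF w)) (at w)"
    and DF: "continuous_on UNIV DF"
    and flow: "\<And>w t. ((\<lambda>s. Phi s w) has_vector_derivative F (Phi t w)) (at t)"
    and flow0: "\<And>w. Phi 0 w = w" and T: "0 \<le> T"
    and y: "\<And>h. solves_linear_ode (\<lambda>t. DF (Phi t z)) T h (y h)"
  shows "(Phi T has_derivative (\<lambda>h. y h T)) (at z)"
proof -
  define K where "K = (\<lambda>t. Phi t z) ` {0..T}"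
  have K: "compact K"
    unfolding K_def by (intro compact_continuous_image continuous_on_flow[OF flow] compact_Icc)
  obtain L where L: "0 < L" and near: "\<And>x u. x \<in> K \<Longrightarrow> norm u \<le> 1 \<Longrightarrow> norm (DF (x + u)) \<le> L"
    using continuous_blinfun_bounded_near_compact[OF K DF] by blast
  have orbit: "Phi t z \<in> K" if "t \<in> {0..T}" for t unfolding K_def using that by blast
  have bound: "norm (DF (Phi t z)) \<le> L" if "t \<in> {0..T}" for t
    using near[OF orbit[OF that], of 0] by simp
  have lip: "norm (F (Phi t z + u) - F (Phi t z)) \<le> L * norm u"
    if "t \<in> {0..T}" "norm u \<le> 1" for t u
    using norm_diff_le_of_bounded_derivative[OF F near[OF orbit]] that by blast
  have unique: "y h T = u T" if "solves_linear_ode (\<lambda>t. DF (Phi t z)) T h u" for h u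
    using solves_linear_ode_unique[OF bound y that] T by simp
  have lin: "linear (\<lambda>h. y h T)"
    by (intro linearI unique solves_linear_ode_add solves_linear_ode_scaleR y)
  have "\<exists>d>0. \<forall>x. norm (x - z) < d \<longrightarrow>
      norm (Phi T x - Phi T z - y (x - z) T) \<le> e * norm (x - z)" if "0 < e" for e
    using flow_remainder_small[OF F DF flow flow0 T y lin K orbit _ bound lip that] L
    by (metis less_imp_le)
  then show ?thesis
    unfolding has_derivative_at_alt using lin linear_conv_bounded_linear by blast
qed

section \<open>The linearised Hamiltonian flow\<close>

lemma w0_has_vector_derivative:
  assumes "(y1 has_vector_derivative d1) (at t)" "(y2 has_vector_derivative d2) (at t)"
  shows "((\<lambda>t. w0 (y1 t) (y2 t)) has_real_derivative w0 d1 (y2 t) + w0 (y1 t) d2) (at t)"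
proof -
  have "((\<lambda>t. Jmat (y1 t)) has_vector_derivative Jmat d1) (at t)"
    by (rule bounded_linear.has_vector_derivative[OF bounded_linear_Jmat assms(1)])
  from bounded_bilinear.has_vector_derivative[OF bounded_bilinear_inner this assms(2)] show ?thesis
    unfolding w0_def by (simp add: has_real_derivative_iff_has_vector_derivative add.commute)
qed

lemma solves_linear_ode_w0_eq:
  fixes A :: "real \<Rightarrow> ('n::finite) phase_space \<Rightarrow>\<^sub>L 'n phase_space"
  assumes T: "0 \<le> T" and sym: "\<And>t p q. w0 (blinfun_apply (A t) p) q + w0 p (A t q) = 0"
    and y1: "solves_linear_ode A T h1 y1" and y2: "solves_linear_ode A T h2 y2"
  shows "w0 (y1 T) (y2 T) = w0 h1 h2"
proof (cases "T = 0")
  case False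
  then have "0 < T" using T by simp
  moreover have "continuous_on {0..T} (\<lambda>t. w0 (y1 t) (y2 t))"
    using y1 y2 unfolding w0_def solves_linear_ode_def
    by (intro continuous_on_inner linear_continuous_on_compose[OF _ linear_Jmat]) auto
  moreover have "((\<lambda>t. w0 (y1 t) (y2 t)) has_derivative (*) 0) (at t)" if "0 < t" "t < T" for t
    using w0_has_vector_derivative[of y1 "A t (y1 t)" t y2 "A t (y2 t)"] y1 y2 that sym
    unfolding solves_linear_ode_def has_field_derivative_def by simp
  ultimately obtain \<xi> where "0 < \<xi>" "\<xi> < T"
    "w0 (y1 T) (y2 T) - w0 (y1 0) (y2 0) = 0 * (T - 0)"
    by (rule mvt)
  then show ?thesis using y1 y2 unfolding solves_linear_ode_def by simp
qed (use y1 y2 in \<open>simp add: solves_linear_ode_def\<close>)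

lemma solves_linear_ode_flow_velocity:
  assumes F: "\<And>w. (F has_derivative blinfun_apply (DF w)) (at w)"
    and flow: "\<And>w t. ((\<lambda>s. Phi s w) has_vector_derivative F (Phi t w)) (at t)"
    and flow0: "\<And>w. Phi 0 w = w"
  shows "solves_linear_ode (\<lambda>t. DF (Phi t z)) T (F z) (\<lambda>t. F (Phi t z))"
proof -
  have "((\<lambda>t. F (Phi t z)) has_vector_derivative DF (Phi t z) (F (Phi t z))) (at t)" for t
    using diff_chain_at[OF flow[unfolded has_vector_derivative_def] F]
    by (simp add: has_vector_derivative_def o_def blinfun.scaleR_right)
  then show ?thesis
    unfolding solves_linear_ode_def using flow0
    by (auto intro: continuous_at_imp_continuous_on has_vector_derivative_continuous)
qed

lemma flow_derivative_symplectic_nonneg: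
  fixes F :: "('n::finite) phase_space \<Rightarrow> 'n phase_space"
    and DF :: "'n phase_space \<Rightarrow> 'n phase_space \<Rightarrow>\<^sub>L 'n phase_space"
  assumes F: "\<And>w. (F has_derivative blinfun_apply (DF w)) (at w)"
    and DF: "continuous_on UNIV DF"
    and sym: "\<And>w p q. w0 (DF w p) q + w0 p (DF w q) = 0"
    and flow: "\<And>w t. ((\<lambda>s. Phi s w) has_vector_derivative F (Phi t w)) (at t)"
    and flow0: "\<And>w. Phi 0 w = w" and T: "0 \<le> T"
  obtains Y where "(Phi T has_derivative Y) (at z)" "\<And>p q. w0 (Y p) (Y q) = w0 p q"
    "Y (F z) = F (Phi T z)"
proof -
  have cont: "continuous_on {0..T} (\<lambda>t. DF (Phi t z))"
    by (rule continuous_on_compose2[OF DF continuous_on_flow[OF flow]]) auto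
  have "\<forall>h. \<exists>y. solves_linear_ode (\<lambda>t. DF (Phi t z)) T h y"
    using solves_linear_ode_exists[OF T cont] by blast
  then obtain y where y: "\<And>h. solves_linear_ode (\<lambda>t. DF (Phi t z)) T h (y h)"
    by (metis choice)
  obtain L where "\<forall>t\<in>{0..T}. norm (DF (Phi t z)) \<le> L"
    using compact_imp_bounded[OF compact_continuous_image[OF cont compact_Icc]]
    unfolding bounded_iff by auto
  then have "y (F z) T = F (Phi T z)"
    using solves_linear_ode_unique[OF _ y
      solves_linear_ode_flow_velocity[OF F flow flow0], of L T] T
    by simp
  moreover have "w0 (y p T) (y q T) = w0 p q" for p q
    using solves_linear_ode_w0_eq[OF T _ y y] sym by blast
  ultimately show ?thesis
    using that flow_has_derivative_variational[OF F DF flow flow0 T y] by blast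
qed

lemma flow_derivative_symplectic:
  fixes F :: "('n::finite) phase_space \<Rightarrow> 'n phase_space"
    and DF :: "'n phase_space \<Rightarrow> 'n phase_space \<Rightarrow>\<^sub>L 'n phase_space"
  assumes F: "\<And>w. (F has_derivative blinfun_apply (DF w)) (at w)"
    and DF: "continuous_on UNIV DF"
    and sym: "\<And>w p q. w0 (DF w p) q + w0 p (DF w q) = 0"
    and flow: "\<And>w t. ((\<lambda>s. Phi s w) has_vector_derivative F (Phi t w)) (at t)"
    and flow0: "\<And>w. Phi 0 w = w"
  obtains Y where "(Phi T has_derivative Y) (at z)" "\<And>p q. w0 (Y p) (Y q) = w0 p q"
    "Y (F z) = F (Phi T z)"
proof (cases "0 \<le> T")
  case True
  then show ?thesis using flow_derivative_symplectic_nonneg[OF F DF sym flow flow0] that by blast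
next
  case False
  have F': "((\<lambda>w. - F w) has_derivative blinfun_apply (- DF w)) (at w)" for w
    using has_derivative_minus[OF F[of w]] by (simp add: uminus_blinfun.rep_eq)
  have sym': "w0 ((- DF w) p) q + w0 p ((- DF w) q) = 0" for w p q
    using sym[of w p q]
    by (simp add: uminus_blinfun.rep_eq linear_neg[OF linear_w0_left]
      linear_neg[OF linear_w0_right])
  have flow': "((\<lambda>s. Phi (- s) w) has_vector_derivative - F (Phi (- t) w)) (at t)" for w t
  proof -
    have "((\<lambda>s. - s) has_vector_derivative - 1) (at t)"
      using has_vector_derivative_minus[OF has_vector_derivative_id] by simp
    from vector_diff_chain_at[OF this flow[of w "- t"]] show ?thesis by (simp add: o_def)
  qed
  have "\<exists>Y. ((\<lambda>w. Phi (- (- T)) w) has_derivative Y) (at z) \<and> (\<forall>p q. w0 (Y p) (Y q) = w0 p q) \<and>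
      Y (- F z) = - F (Phi (- (- T)) z)"
    by (rule flow_derivative_symplectic_nonneg[where Phi = "\<lambda>s. Phi (- s)" and T = "- T",
          OF F' continuous_on_minus[OF DF] sym' flow']) (use flow0 False in auto)
  then obtain Y where Y: "(Phi T has_derivative Y) (at z)" "\<And>p q. w0 (Y p) (Y q) = w0 p q"
    "Y (- F z) = - F (Phi T z)"
    by auto
  moreover have "Y (F z) = F (Phi T z)"
    using Y(3) linear_neg[OF has_derivative_linear[OF Y(1)], of "F z"] by simp
  ultimately show ?thesis using that by blast
qed

theorem mainTheorem3:
  fixes H :: "(real^'n) \<times> (real^'n) \<Rightarrow> real"
    and Phi :: "real \<Rightarrow> (real^'n) \<times> (real^'n) \<Rightarrow> (real^'n) \<times> (real^'n)"
    and E T :: real and z :: "(real^'n) \<times> (real^'n)"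
  assumes "smooth_fun H"
    and "hamiltonian_flow H Phi"
    and "H z = E"
    and "Phi T z = z"
    and "grad H z \<noteq> 0"
  shows "let M = frechet_derivative (Phi T) (at z);
             N = (\<lambda>x. M x - x);
             E1 = {x. \<exists>k\<ge>1. (N ^^ k) x = 0};
             \<E>1 = {x. M x = x \<and> inner (grad H z) x = 0};
             \<E>2 = {x \<in> \<E>1. \<forall>y\<in>\<E>1. w0 x y = 0}
         in E1 = {x. (N ^^ 2) x = 0} \<longleftrightarrow> dim E1 = dim \<E>1 + dim \<E>2"
proof -
  obtain DF where F: "\<And>w. ((\<lambda>w. Jmat (grad H w)) has_derivative blinfun_apply (DF w)) (at w)"
    and DF: "continuous_on UNIV DF" and sym: "\<And>w p q. w0 (DF w p) q + w0 p (DF w q) = 0"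
    using hamiltonian_field_derivative[OF assms(1)] by blast
  have flow: "\<And>w t. ((\<lambda>s. Phi s w) has_vector_derivative Jmat (grad H (Phi t w))) (at t)"
    and flow0: "\<And>w. Phi 0 w = w"
    using assms(2) unfolding hamiltonian_flow_def by blast+
  obtain Y where Y: "(Phi T has_derivative Y) (at z)" and symp: "\<And>p q. w0 (Y p) (Y q) = w0 p q"
    and fixed: "Y (Jmat (grad H z)) = Jmat (grad H (Phi T z))"
    using flow_derivative_symplectic[OF F DF sym flow flow0] by blast
  have "frechet_derivative (Phi T) (at z) = Y"
    using frechet_derivative_at[OF Y] by simp
  then show ?thesis
    using symplectic_generalized_eigenspace_one_iff[OF has_derivative_linear[OF Y] symp]
      fixed assms(4)
    unfolding Let_def by simp
qed

end
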